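(* There exist a financial system $S$ in the base model (all contracts of the same priority), banks $u\neq v$ and a number $x>0$ such that: $S$ has exactly one solution $r$; the system $S'$ obtained from $S$ by replacing $e_u$ with $e_u+x$ (everything else unchanged) has exactly one solution $r'$; and $q'_v(r')>q_v(r)+x$, where $q_v$ and $q'_v$ denote the payoff of $v$ in $S$ and $S'$, respectively.
   Context: A financial system with payment priorities consists of: a finite set $V$ of banks; external assets $e_v\ge 0$ for each $v\in V$; a number $P\ge 1$ of priority levels; and a finite set of contracts, each of which is either a debt contract from a debtor $u$ to a creditor $v\neq u$ with weight $c>0$, or a credit default swap (CDS) from a debtor $u$ to a creditor $v\neq u$ in reference to a bank $w\notin\{u,v\}$ (the reference entity) with weight $c>0$. Every contract has a priority in $\{1,\dots,P\}$ (1 is the highest priority). It is assumed that every bank that is the reference entity of some CDS is the debtor of at least one debt contract of positive weight. Given a recovery rate vector $r\in[0,1]^V$: the liability of a contract $k$ is $l_k(r)=c$ if $k$ is a debt of weight $c$, and $l_k(r)=c\,(1-r_w)$ if $k$ is a CDS of weight $c$ in reference to $w$. For a bank $v$, $l_v(r)$ is the sum of the liabilities of the contracts with debtor $v$; $l_v^{(\rho)}(r)$ is the sum of the liabilities of contracts with debtor $v$ and priority $\rho$; and $l_v^{(\le\rho)}(r)=\sum_{i=1}^{\rho}l_v^{(i)}(r)$ (with $l_v^{(\le 0)}=0$). The payment on a contract $k$ with debtor $v$ and priority $\rho$ is $p_k(r)=l_k(r)\cdot\min\{1,\max\{0,(r_v l_v(r)-l_v^{(\le\rho-1)}(r))/l_v^{(\rho)}(r)\}\}$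 (and $p_k(r)=0$ if $l_v^{(\rho)}(r)=0$). The assets of $v$ are $a_v(r)=e_v+\sum_k p_k(r)$, summing over contracts $k$ with creditor $v$. A vector $r\in[0,1]^V$ is a solution (clearing vector) if for every $v\in V$: $r_v=1$ when $a_v(r)\ge l_v(r)$, and $r_v=a_v(r)/l_v(r)$ when $a_v(r)<l_v(r)$. The payoff of $v$ is $q_v(r)=\max\{a_v(r)-l_v(r),0\}$. When $P=1$, payments reduce to $p_k(r)=r_v\,l_k(r)$ (principle of proportionality); this is called the base model. *)

theory Defs
  imports Complex_Main
begin

datatype contract =
    Debt (debtor: nat) (creditor: nat) (weight: real) (prio: nat)
  | CDS (debtor: nat) (creditor: nat) (refent: nat) (weight: real) (prio: nat)

record fsys =
  banks :: "nat set"
  ext :: "nat \<Rightarrow> real"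
  nprio :: nat
  contracts :: "contract set"

definition wf_fsys :: "fsys \<Rightarrow> bool" where
  "wf_fsys S \<longleftrightarrow>
     finite (banks S) \<and> finite (contracts S) \<and> nprio S \<ge> 1 \<and>
     (\<forall>v\<in>banks S. ext S v \<ge> 0) \<and>
     (\<forall>k\<in>contracts S. debtor k \<in> banks S \<and> creditor k \<in> banks S \<and>
        debtor k \<noteq> creditor k \<and> weight k > 0 \<and> prio k \<in> {1..nprio S} \<and>
        (case k of Debt _ _ _ _ \<Rightarrow> True
         | CDS u v w _ _ \<Rightarrow> w \<in> banks S \<and> w \<noteq> u \<and> w \<noteq> v)) \<and>
     (\<forall>k\<in>contracts S. case k of Debt _ _ _ _ \<Rightarrow> True
        | CDS _ _ w _ _ \<Rightarrow> (\<exists>k'\<in>contracts S. is_Debt k' \<and> debtor k' = w \<and> weight k' > 0))"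

definition base_model :: "fsys \<Rightarrow> bool" where
  "base_model S \<longleftrightarrow> wf_fsys S \<and> nprio S = 1"

definition liab :: "(nat \<Rightarrow> real) \<Rightarrow> contract \<Rightarrow> real" where
  "liab r k = (case k of Debt _ _ c _ \<Rightarrow> c | CDS _ _ w c _ \<Rightarrow> c * (1 - r w))"

definition liab_bank :: "fsys \<Rightarrow> (nat \<Rightarrow> real) \<Rightarrow> nat \<Rightarrow> real" where
  "liab_bank S r v = (\<Sum>k\<in>{k\<in>contracts S. debtor k = v}. liab r k)"

definition liab_prio :: "fsys \<Rightarrow> (nat \<Rightarrow> real) \<Rightarrow> nat \<Rightarrow> nat \<Rightarrow> real" where
  "liab_prio S r v \<rho> = (\<Sum>k\<in>{k\<in>contracts S. debtor k = v \<and> prio k = \<rho>}. liab r k)"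

definition liab_upto :: "fsys \<Rightarrow> (nat \<Rightarrow> real) \<Rightarrow> nat \<Rightarrow> nat \<Rightarrow> real" where
  "liab_upto S r v \<rho> = (\<Sum>i\<in>{1..\<rho>}. liab_prio S r v i)"

definition payment :: "fsys \<Rightarrow> (nat \<Rightarrow> real) \<Rightarrow> contract \<Rightarrow> real" where
  "payment S r k =
     (let v = debtor k; \<rho> = prio k; L = liab_prio S r v \<rho> in
      if L = 0 then 0
      else liab r k * min 1 (max 0 ((r v * liab_bank S r v - liab_upto S r v (\<rho> - 1)) / L)))"

definition assets :: "fsys \<Rightarrow> (nat \<Rightarrow> real) \<Rightarrow> nat \<Rightarrow> real" where
  "assets S r v = ext S v + (\<Sum>k\<in>{k\<in>contracts S. creditor k = v}. payment S r k)"

definition is_solution :: "fsys \<Rightarrow> (nat \<Rightarrow> real) \<Rightarrow> bool" where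
  "is_solution S r \<longleftrightarrow>
     (\<forall>v\<in>banks S. 0 \<le> r v \<and> r v \<le> 1 \<and>
        (assets S r v \<ge> liab_bank S r v \<longrightarrow> r v = 1) \<and>
        (assets S r v < liab_bank S r v \<longrightarrow> r v = assets S r v / liab_bank S r v))"

text \<open>Recovery vectors are only meaningful on the banks; uniqueness is up to values on banks.\<close>
definition unique_solution :: "fsys \<Rightarrow> (nat \<Rightarrow> real) \<Rightarrow> bool" where
  "unique_solution S r \<longleftrightarrow> is_solution S r \<and>
     (\<forall>r'. is_solution S r' \<longrightarrow> (\<forall>v\<in>banks S. r' v = r v))"

definition payoff :: "fsys \<Rightarrow> (nat \<Rightarrow> real) \<Rightarrow> nat \<Rightarrow> real" where
  "payoff S r v = max (assets S r v - liab_bank S r v) 0"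

definition add_ext :: "fsys \<Rightarrow> nat \<Rightarrow> real \<Rightarrow> fsys" where
  "add_ext S u x = S\<lparr>ext := (ext S)(u := ext S u + x)\<rparr>"

end

theory Submission
  imports Defs
begin

text \<open>Bank 1 has sold bank 2 a CDS of weight 2 on bank 0, whose only obligation is a debt
  of 1 to bank 2. As long as bank 0 is in default, every unit of external assets given to
  bank 0 raises its recovery rate by one unit and so lowers the CDS liability of bank 1 by
  two units; bank 1, which stays solvent, gains twice the gift.\<close>

definition cds_example :: "real \<Rightarrow> fsys" where
  "cds_example e = \<lparr>banks = {0, 1, 2}, ext = (\<lambda>i. if i = 0 then e else if i = 1 then 2 else 0),
     nprio = 1, contracts = {Debt 0 2 1 1, CDS 1 2 0 2 1}\<rparr>"

definition cds_recovery :: "real \<Rightarrow> nat \<Rightarrow> real" where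
  "cds_recovery e = (\<lambda>i. if i = 0 then e else 1)"

lemma contracts_cds_example: "contracts (cds_example e) = {Debt 0 2 1 1, CDS 1 2 0 2 1}"
  by (simp add: cds_example_def)

lemma banks_cds_example: "banks (cds_example e) = {0, 1, 2}"
  by (simp add: cds_example_def)

lemma base_model_cds_example: "0 \<le> e \<Longrightarrow> base_model (cds_example e)"
  by (auto simp: base_model_def wf_fsys_def cds_example_def)

lemma add_ext_cds_example: "add_ext (cds_example e) 0 x = cds_example (e + x)"
  by (simp add: add_ext_def cds_example_def fun_eq_iff)

text \<open>Bank 1 is written \<open>Suc 0\<close>, the simp normal form of \<open>1 :: nat\<close>.\<close>

lemma liab_bank_cds_example:
  "liab_bank (cds_example e) r 0 = 1"
  "liab_bank (cds_example e) r (Suc 0) = 2 * (1 - r 0)"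
  "liab_bank (cds_example e) r 2 = 0"
proof -
  have "{k \<in> contracts (cds_example e). debtor k = 0} = {Debt 0 2 1 1}"
    and "{k \<in> contracts (cds_example e). debtor k = Suc 0} = {CDS 1 2 0 2 1}"
    and "{k \<in> contracts (cds_example e). debtor k = 2} = {}"
    by (auto simp: contracts_cds_example)
  then show "liab_bank (cds_example e) r 0 = 1" "liab_bank (cds_example e) r (Suc 0) = 2 * (1 - r 0)"
    "liab_bank (cds_example e) r 2 = 0"
    unfolding liab_bank_def by (simp_all only:) (simp_all add: liab_def)
qed

lemma assets_cds_example:
  "assets (cds_example e) r 0 = e"
  "assets (cds_example e) r (Suc 0) = 2"
proof -
  have "{k \<in> contracts (cds_example e). creditor k = 0} = {}"
    and "{k \<in> contracts (cds_example e). creditor k = Suc 0} = {}"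
    by (auto simp: contracts_cds_example)
  then show "assets (cds_example e) r 0 = e" "assets (cds_example e) r (Suc 0) = 2"
    unfolding assets_def by (simp_all only:) (simp_all add: cds_example_def)
qed

lemma assets_cds_example_nonneg: "r 0 \<le> 1 \<Longrightarrow> assets (cds_example e) r 2 \<ge> 0"
  unfolding assets_def
  by (intro add_nonneg_nonneg sum_nonneg)
     (auto simp: cds_example_def payment_def Let_def liab_def)

lemma solution_cds_example_iff:
  assumes "0 \<le> e" "e \<le> 1"
  shows "is_solution (cds_example e) r \<longleftrightarrow> (\<forall>v\<in>{0, 1, 2}. r v = cds_recovery e v)"
proof
  assume sol: "is_solution (cds_example e) r"
  then have r0: "r 0 = e"
    using assms by (auto simp: is_solution_def banks_cds_example liab_bank_cds_example
        assets_cds_example split: if_splits)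
  moreover have "r 1 = 1"
    using sol assms r0 by (auto simp: is_solution_def banks_cds_example liab_bank_cds_example
        assets_cds_example)
  moreover have "r 2 = 1"
    using sol assms r0 assets_cds_example_nonneg[of r e]
    by (auto simp: is_solution_def banks_cds_example liab_bank_cds_example)
  ultimately show "\<forall>v\<in>{0, 1, 2}. r v = cds_recovery e v"
    by (simp add: cds_recovery_def)
next
  assume "\<forall>v\<in>{0, 1, 2}. r v = cds_recovery e v"
  then have "r 0 = e" "r 1 = 1" "r 2 = 1"
    by (simp_all add: cds_recovery_def)
  then show "is_solution (cds_example e) r"
    using assms assets_cds_example_nonneg[of r e]
    by (auto simp: is_solution_def banks_cds_example liab_bank_cds_example assets_cds_example)
qed

lemma unique_solution_cds_example:
  "0 \<le> e \<Longrightarrow> e \<le> 1 \<Longrightarrow> unique_solution (cds_example e) (cds_recovery e)"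
  by (simp add: unique_solution_def solution_cds_example_iff banks_cds_example)

lemma payoff_cds_example: "0 \<le> e \<Longrightarrow> payoff (cds_example e) (cds_recovery e) (Suc 0) = 2 * e"
  by (simp add: payoff_def liab_bank_cds_example assets_cds_example cds_recovery_def)

theorem mainTheorem3:
  shows "\<exists>S u v x r r'. base_model S \<and> u \<in> banks S \<and> v \<in> banks S \<and> u \<noteq> v \<and> x > 0 \<and>
     unique_solution S r \<and> unique_solution (add_ext S u x) r' \<and>
     payoff (add_ext S u x) r' v > payoff S r v + x"
proof (intro exI conjI)
  show "base_model (cds_example 0)"
    by (simp add: base_model_cds_example)
  show "unique_solution (cds_example 0) (cds_recovery 0)"
    by (simp add: unique_solution_cds_example)
  show "unique_solution (add_ext (cds_example 0) 0 (1/2)) (cds_recovery (1/2))"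
    by (simp add: add_ext_cds_example unique_solution_cds_example)
  show "payoff (add_ext (cds_example 0) 0 (1/2)) (cds_recovery (1/2)) 1
      > payoff (cds_example 0) (cds_recovery 0) 1 + 1/2"
    by (simp add: add_ext_cds_example payoff_cds_example)
qed (simp_all add: banks_cds_example)

end
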